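(* Let $R>0$, let $D_R\subset\mathbb{R}^2$ be the disk of radius $R$ centered at the origin, let $1<\gamma<3$, and define $\alpha=\frac{3-\gamma}{2\gamma}$ and $\delta$ by $\frac{1}{\gamma}+\frac{1}{\delta}=1$. Then for every smooth non-negative function $\rho$ on the closed disk $\overline{D_R}$ and all $a,b>0$, $$ab\,\alpha\left|\int_{D_{R}}\left(\frac{1}{|x|}-\frac{2}{R}\right)\rho(x)\,\mathrm{d} x\right|\leq \frac{a^\gamma C(\gamma)}{\gamma}\int_{D_{R}}|\nabla\rho(x)^{\alpha}|^{\gamma}\,\mathrm{d} x+\frac{b^\delta C(\delta)}{\delta}\int_{D_{R}}\rho(x)^{3/2}\,\mathrm{d} x.$$
   Context: For $p>0$, $C(p)=2^{1-p/2}$ if $0<p\le 2$ and $C(p)=1$ if $p\ge 2$. *)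

theory Defs
  imports "HOL-Analysis.Analysis"
begin

definition Cconst :: "real \<Rightarrow> real" where
  "Cconst p = (if p \<le> 2 then 2 powr (1 - p / 2) else 1)"

fun higher_differentiable_on ::
  "nat \<Rightarrow> 'a::real_normed_vector set \<Rightarrow> ('a \<Rightarrow> 'b::real_normed_vector) \<Rightarrow> bool" where
  "higher_differentiable_on 0 S f = continuous_on S f"
| "higher_differentiable_on (Suc n) S f =
     (f differentiable_on S \<and>
      (\<forall>v. higher_differentiable_on n S (\<lambda>x. frechet_derivative f (at x) v)))"

definition smooth_on :: "'a::real_normed_vector set \<Rightarrow> ('a \<Rightarrow> 'b::real_normed_vector) \<Rightarrow> bool" where
  "smooth_on S f = (\<forall>n. higher_differentiable_on n S f)"

definition grad :: "(real^2 \<Rightarrow> real) \<Rightarrow> real^2 \<Rightarrow> real^2" where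
  "grad f x = (\<chi> i. frechet_derivative f (at x) (axis i 1))"

end

theory Submission
  imports Defs
begin

text \<open>
  Since 1/|x| - 1/R is the integral of 1/s^2 over |x| < s < R, Fubini and the scaling x = s y
  turn A = int_{B_R} (1/|x| - 1/R) \<rho>(x) dx into int_{B_1} int_0^R \<rho>(s y) ds dy.
  Along each ray (s \<rho>(s y))' = \<rho>(s y) + (s y) \<bullet> grad \<rho>(s y), so int_0^R \<rho>(s y) ds differs
  from R \<rho>(R y) by at most int_0^R |(s y) \<bullet> grad \<rho>(s y)| ds. Integrating over y, and using
  int_{B_1} R \<rho>(R y) dy = (1/R) int_{B_R} \<rho>, the integral of (1/|x| - 2/R) \<rho> is bounded in
  absolute value by int_{B_R} (1/|x| - 1/R) |x \<bullet> grad \<rho>(x)| dx \<le> int_{B_R} |grad \<rho>|.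

  Where \<rho> > 0 we have \<alpha> |grad \<rho>| = |grad (\<rho> powr \<alpha>)| \<rho> powr (1 - \<alpha>), and where \<rho> = 0
  the gradient vanishes (an interior minimum), so Young's inequality with the conjugate exponents
  \<gamma> and \<delta> bounds a b \<alpha> |grad \<rho>| pointwise; here (1 - \<alpha>) \<delta> = 3/2.
\<close>

section \<open>Integration along rays\<close>

lemma abs_integral_sub_endpoint_le:
  fixes f f' :: "real \<Rightarrow> real"
  assumes "0 \<le> R"
    and der: "\<And>s. s \<in> {0..R} \<Longrightarrow> (f has_real_derivative f' s) (at s within {0..R})"
    and cont': "continuous_on {0..R} f'"
  shows "\<bar>integral {0..R} f - R * f R\<bar> \<le> integral {0..R} (\<lambda>s. \<bar>s * f' s\<bar>)"
proof -
  have "continuous_on {0..R} f"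
    using der by (rule DERIV_continuous_on)
  then have int_f: "f integrable_on {0..R}"
    by (rule integrable_continuous_real)
  have cont_sf': "continuous_on {0..R} (\<lambda>s. s * f' s)"
    by (intro continuous_intros cont')
  have "((\<lambda>s. f s + s * f' s) has_integral (R * f R - 0 * f 0)) {0..R}"
  proof (rule fundamental_theorem_of_calculus)
    fix s assume "s \<in> {0..R}"
    from DERIV_mult[OF DERIV_ident der[OF this]]
    show "((\<lambda>s. s * f s) has_vector_derivative f s + s * f' s) (at s within {0..R})"
      by (simp add: has_real_derivative_iff_has_vector_derivative[symmetric] algebra_simps)
  qed (use \<open>0 \<le> R\<close> in simp)
  then have "integral {0..R} f + integral {0..R} (\<lambda>s. s * f' s) = R * f R"
    using integral_add[OF int_f integrable_continuous_real[OF cont_sf']] by (simp add: integral_unique)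
  moreover have "\<bar>integral {0..R} (\<lambda>s. s * f' s)\<bar> \<le> integral {0..R} (\<lambda>s. \<bar>s * f' s\<bar>)"
    by (rule integral_norm_bound_integral[of "\<lambda>s. s * f' s" "{0..R}" "\<lambda>s. \<bar>s * f' s\<bar>", unfolded real_norm_def])
       (auto intro!: integrable_continuous_real continuous_on_rabs cont_sf')
  ultimately show ?thesis by linarith
qed

lemma nn_integral_endpoint_bounds:
  fixes f f' :: "real \<Rightarrow> real"
  assumes "0 \<le> R"
    and der: "\<And>s. s \<in> {0..R} \<Longrightarrow> (f has_real_derivative f' s) (at s within {0..R})"
    and cont': "continuous_on {0..R} f'"
    and nonneg: "\<And>s. s \<in> {0..R} \<Longrightarrow> 0 \<le> f s"
  shows "(\<integral>\<^sup>+s\<in>{0<..<R}. ennreal (f s) \<partial>lborel)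
           \<le> ennreal (R * f R) + (\<integral>\<^sup>+s\<in>{0<..<R}. ennreal \<bar>s * f' s\<bar> \<partial>lborel)"
    and "ennreal (R * f R)
           \<le> (\<integral>\<^sup>+s\<in>{0<..<R}. ennreal (f s) \<partial>lborel) + (\<integral>\<^sup>+s\<in>{0<..<R}. ennreal \<bar>s * f' s\<bar> \<partial>lborel)"
proof -
  have "continuous_on {0..R} f"
    using der by (rule DERIV_continuous_on)
  then have I: "(f has_integral integral {0..R} f) {0<..<R}"
    unfolding has_integral_Icc_iff_Ioo[symmetric] by (intro integrable_integral integrable_continuous_real)
  have "continuous_on {0..R} (\<lambda>s. \<bar>s * f' s\<bar>)"
    by (intro continuous_intros cont')
  then have J: "((\<lambda>s. \<bar>s * f' s\<bar>) has_integral integral {0..R} (\<lambda>s. \<bar>s * f' s\<bar>)) {0<..<R}"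
    unfolding has_integral_Icc_iff_Ioo[symmetric] by (intro integrable_integral integrable_continuous_real)
  have I0: "0 \<le> integral {0..R} f"
    by (rule has_integral_nonneg[OF I]) (use nonneg in auto)
  have J0: "0 \<le> integral {0..R} (\<lambda>s. \<bar>s * f' s\<bar>)"
    by (rule has_integral_nonneg[OF J]) simp
  have fR: "0 \<le> R * f R"
    using \<open>0 \<le> R\<close> nonneg[of R] by simp
  have nnI: "(\<integral>\<^sup>+s\<in>{0<..<R}. ennreal (f s) \<partial>lborel) = ennreal (integral {0..R} f)"
    by (rule nn_integral_has_integral_lebesgue'[OF _ I]) (use nonneg in auto)
  have nnJ: "(\<integral>\<^sup>+s\<in>{0<..<R}. ennreal \<bar>s * f' s\<bar> \<partial>lborel) = ennreal (integral {0..R} (\<lambda>s. \<bar>s * f' s\<bar>))"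
    by (rule nn_integral_has_integral_lebesgue'[OF _ J]) auto
  note bound = abs_integral_sub_endpoint_le[OF assms(1-3)]
  show "(\<integral>\<^sup>+s\<in>{0<..<R}. ennreal (f s) \<partial>lborel)
           \<le> ennreal (R * f R) + (\<integral>\<^sup>+s\<in>{0<..<R}. ennreal \<bar>s * f' s\<bar> \<partial>lborel)"
    unfolding nnI nnJ ennreal_plus[OF fR J0, symmetric] by (rule ennreal_leI) (use bound in linarith)
  show "ennreal (R * f R)
           \<le> (\<integral>\<^sup>+s\<in>{0<..<R}. ennreal (f s) \<partial>lborel) + (\<integral>\<^sup>+s\<in>{0<..<R}. ennreal \<bar>s * f' s\<bar> \<partial>lborel)"
    unfolding nnI nnJ ennreal_plus[OF I0 J0, symmetric] by (rule ennreal_leI) (use bound in linarith)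
qed

lemma nn_integral_inverse_square:
  fixes t R :: real
  assumes "0 < t" and "0 < R"
  shows "(\<integral>\<^sup>+s\<in>{t<..<R}. ennreal (1 / s\<^sup>2) \<partial>lborel) = ennreal (1/t - 1/R)"
proof (cases "t < R")
  case True
  have "((\<lambda>s. 1 / s\<^sup>2) has_integral (-1/R - -1/t)) {t..R}"
  proof (rule fundamental_theorem_of_calculus)
    fix s assume "s \<in> {t..R}"
    then have "s \<noteq> 0" using assms by auto
    then show "((\<lambda>s. -1/s) has_vector_derivative 1 / s\<^sup>2) (at s within {t..R})"
      by (auto intro!: derivative_eq_intros
          simp: has_real_derivative_iff_has_vector_derivative[symmetric] power2_eq_square)
  qed (use True in simp)
  then have "((\<lambda>s. 1 / s\<^sup>2) has_integral (1/t - 1/R)) {t<..<R}"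
    by (simp add: has_integral_Icc_iff_Ioo)
  then show ?thesis
    by (rule nn_integral_has_integral_lebesgue'[rotated]) simp
next
  case False
  then have "1/t - 1/R \<le> 0"
    using assms by (simp add: frac_le)
  then show ?thesis
    using False by (simp add: ennreal_neg)
qed

lemma nn_integral_lborel_scaleR:
  fixes f :: "'a::euclidean_space \<Rightarrow> ennreal"
  assumes [measurable]: "f \<in> borel_measurable borel" and "c \<noteq> 0"
  shows "(\<integral>\<^sup>+x. f x \<partial>lborel) = ennreal (\<bar>c\<bar> ^ DIM('a)) * (\<integral>\<^sup>+x. f (c *\<^sub>R x) \<partial>lborel)"
  by (subst lborel_affine[OF \<open>c \<noteq> 0\<close>, of 0])
     (simp add: nn_integral_density nn_integral_distr nn_integral_cmult)

lemma nn_integral_ball_rescale: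
  fixes \<phi> :: "'a::euclidean_space \<Rightarrow> ennreal"
  assumes [measurable]: "\<phi> \<in> borel_measurable borel" and "0 < s"
  shows "(\<integral>\<^sup>+x\<in>ball 0 s. \<phi> x \<partial>lborel)
           = ennreal (s ^ DIM('a)) * (\<integral>\<^sup>+y\<in>ball 0 1. \<phi> (s *\<^sub>R y) \<partial>lborel)"
proof -
  have [measurable]: "ball (0::'a) s \<in> sets borel"
    by simp
  have "(\<lambda>x. \<phi> x * indicator (ball 0 s) x) \<in> borel_measurable borel"
    by measurable
  from nn_integral_lborel_scaleR[OF this, of s] \<open>0 < s\<close>
  have "(\<integral>\<^sup>+x\<in>ball 0 s. \<phi> x \<partial>lborel)
      = ennreal (s ^ DIM('a)) * (\<integral>\<^sup>+y. \<phi> (s *\<^sub>R y) * indicator (ball 0 s) (s *\<^sub>R y) \<partial>lborel)"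
    by simp
  also have "(\<lambda>y. \<phi> (s *\<^sub>R y) * indicator (ball 0 s) (s *\<^sub>R y)) = (\<lambda>y. \<phi> (s *\<^sub>R y) * indicator (ball 0 1) y)"
    using \<open>0 < s\<close> by (auto simp: fun_eq_iff indicator_def)
  finally show ?thesis .
qed

lemma nn_integral_balls_radial_weight:
  fixes \<phi> :: "'a::euclidean_space \<Rightarrow> ennreal"
  assumes [measurable]: "\<phi> \<in> borel_measurable borel" and "0 < R"
  shows "(\<integral>\<^sup>+s\<in>{0<..<R}. ennreal (1 / s\<^sup>2) * (\<integral>\<^sup>+x\<in>ball 0 s. \<phi> x \<partial>lborel) \<partial>lborel)
           = (\<integral>\<^sup>+x\<in>ball 0 R. ennreal (1 / norm x - 1 / R) * \<phi> x \<partial>lborel)"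
proof -
  have "(\<integral>\<^sup>+s\<in>{0<..<R}. ennreal (1 / s\<^sup>2) * (\<integral>\<^sup>+x\<in>ball 0 s. \<phi> x \<partial>lborel) \<partial>lborel)
      = (\<integral>\<^sup>+s. \<integral>\<^sup>+x. ennreal (1 / s\<^sup>2) * \<phi> x * indicator {norm x<..<R} s \<partial>lborel \<partial>lborel)"
  proof (rule nn_integral_cong)
    fix s :: real
    show "ennreal (1 / s\<^sup>2) * (\<integral>\<^sup>+x\<in>ball 0 s. \<phi> x \<partial>lborel) * indicator {0<..<R} s
        = (\<integral>\<^sup>+x. ennreal (1 / s\<^sup>2) * \<phi> x * indicator {norm x<..<R} s \<partial>lborel)"
    proof (cases "0 < s")
      case True
      then show ?thesis
        by (subst nn_integral_cmult[symmetric]) (auto intro!: nn_integral_cong simp: indicator_def mult_ac)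
    next
      case False
      then have "indicator {norm x<..<R} s = (0::ennreal)" for x :: 'a
        by (auto simp: indicator_def not_less intro: order.trans[OF _ norm_ge_zero])
      with False show ?thesis
        by simp
    qed
  qed
  also have "\<dots> = (\<integral>\<^sup>+x. \<integral>\<^sup>+s. ennreal (1 / s\<^sup>2) * \<phi> x * indicator {norm x<..<R} s \<partial>lborel \<partial>lborel)"
    by (rule lborel_pair.Fubini'[symmetric]) (simp only: indicator_def greaterThanLessThan_iff, measurable)
  also have "\<dots> = (\<integral>\<^sup>+x\<in>ball 0 R. ennreal (1 / norm x - 1 / R) * \<phi> x \<partial>lborel)"
  proof (rule nn_integral_cong_AE)
    show "AE x in lborel. (\<integral>\<^sup>+s. ennreal (1 / s\<^sup>2) * \<phi> x * indicator {norm x<..<R} s \<partial>lborel)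
        = ennreal (1 / norm x - 1 / R) * \<phi> x * indicator (ball 0 R) x"
      using AE_lborel_singleton[of 0]
    proof eventually_elim
      case (elim x)
      have "(\<integral>\<^sup>+s. ennreal (1 / s\<^sup>2) * \<phi> x * indicator {norm x<..<R} s \<partial>lborel)
          = (\<integral>\<^sup>+s\<in>{norm x<..<R}. ennreal (1 / s\<^sup>2) \<partial>lborel) * \<phi> x"
        by (subst nn_integral_multc[symmetric]) (auto intro!: nn_integral_cong simp: mult_ac)
      also have "\<dots> = ennreal (1 / norm x - 1 / R) * \<phi> x * indicator (ball 0 R) x"
        using elim \<open>0 < R\<close> by (cases "norm x < R") (auto simp: nn_integral_inverse_square ennreal_neg frac_le)
      finally show ?case .
    qed
  qed
  finally show ?thesis .
qed

lemma nn_integral_ball_by_rays: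
  fixes \<phi> :: "real^2 \<Rightarrow> ennreal"
  assumes [measurable]: "\<phi> \<in> borel_measurable borel" and "0 < R"
  shows "(\<integral>\<^sup>+y\<in>ball 0 1. (\<integral>\<^sup>+s\<in>{0<..<R}. \<phi> (s *\<^sub>R y) \<partial>lborel) \<partial>lborel)
           = (\<integral>\<^sup>+x\<in>ball 0 R. ennreal (1 / norm x - 1 / R) * \<phi> x \<partial>lborel)"
proof -
  have [measurable]: "ball (0::real^2) 1 \<in> sets borel"
    by simp
  have "(\<integral>\<^sup>+y\<in>ball 0 1. (\<integral>\<^sup>+s\<in>{0<..<R}. \<phi> (s *\<^sub>R y) \<partial>lborel) \<partial>lborel)
      = (\<integral>\<^sup>+y. \<integral>\<^sup>+s. \<phi> (s *\<^sub>R y) * indicator {0<..<R} s * indicator (ball 0 1) y \<partial>lborel \<partial>lborel)"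
    by (intro nn_integral_cong) (simp add: nn_integral_multc)
  also have "\<dots> = (\<integral>\<^sup>+s. \<integral>\<^sup>+y. \<phi> (s *\<^sub>R y) * indicator {0<..<R} s * indicator (ball 0 1) y \<partial>lborel \<partial>lborel)"
    by (rule lborel_pair.Fubini') measurable
  also have "\<dots> = (\<integral>\<^sup>+s\<in>{0<..<R}. ennreal (1 / s\<^sup>2) * (\<integral>\<^sup>+x\<in>ball 0 s. \<phi> x \<partial>lborel) \<partial>lborel)"
  proof (rule nn_integral_cong)
    fix s :: real
    show "(\<integral>\<^sup>+y. \<phi> (s *\<^sub>R y) * indicator {0<..<R} s * indicator (ball 0 1) y \<partial>lborel)
        = ennreal (1 / s\<^sup>2) * (\<integral>\<^sup>+x\<in>ball 0 s. \<phi> x \<partial>lborel) * indicator {0<..<R} s"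
    proof (cases "0 < s \<and> s < R")
      case True
      then have "ennreal (1 / s\<^sup>2) * ennreal (s\<^sup>2) = 1"
        by (simp flip: ennreal_mult')
      moreover have "(\<integral>\<^sup>+x\<in>ball 0 s. \<phi> x \<partial>lborel) = ennreal (s\<^sup>2) * (\<integral>\<^sup>+y\<in>ball 0 1. \<phi> (s *\<^sub>R y) \<partial>lborel)"
        using nn_integral_ball_rescale[of \<phi> s] True by simp
      ultimately show ?thesis
        using True by (simp add: mult.assoc[symmetric])
    qed auto
  qed
  also have "\<dots> = (\<integral>\<^sup>+x\<in>ball 0 R. ennreal (1 / norm x - 1 / R) * \<phi> x \<partial>lborel)"
    by (rule nn_integral_balls_radial_weight) fact+
  finally show ?thesis .
qed

lemma scaleR_mem_ball:
  fixes y :: "'a::real_normed_vector"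
  assumes "y \<in> ball 0 1" and "s \<in> {0..R}" and "0 < R"
  shows "s *\<^sub>R y \<in> ball 0 R"
proof -
  have "norm (s *\<^sub>R y) \<le> R * norm y"
    using assms by (auto intro: mult_right_mono)
  also have "\<dots> < R"
    using assms by simp
  finally show ?thesis
    by simp
qed

lemma nn_integral_ray_bounds:
  fixes \<rho> :: "'a::real_inner \<Rightarrow> real" and g :: "'a \<Rightarrow> 'a"
  assumes "0 \<le> R"
    and deriv: "\<And>s. s \<in> {0..R} \<Longrightarrow> (\<rho> has_derivative (\<lambda>v. v \<bullet> g (s *\<^sub>R y))) (at (s *\<^sub>R y))"
    and cont_g: "continuous_on {0..R} (\<lambda>s. g (s *\<^sub>R y))"
    and nonneg: "\<And>s. s \<in> {0..R} \<Longrightarrow> 0 \<le> \<rho> (s *\<^sub>R y)"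
  shows "(\<integral>\<^sup>+s\<in>{0<..<R}. ennreal (\<rho> (s *\<^sub>R y)) \<partial>lborel)
           \<le> ennreal (R * \<rho> (R *\<^sub>R y)) + (\<integral>\<^sup>+s\<in>{0<..<R}. ennreal \<bar>(s *\<^sub>R y) \<bullet> g (s *\<^sub>R y)\<bar> \<partial>lborel)"
    and "ennreal (R * \<rho> (R *\<^sub>R y))
           \<le> (\<integral>\<^sup>+s\<in>{0<..<R}. ennreal (\<rho> (s *\<^sub>R y)) \<partial>lborel)
             + (\<integral>\<^sup>+s\<in>{0<..<R}. ennreal \<bar>(s *\<^sub>R y) \<bullet> g (s *\<^sub>R y)\<bar> \<partial>lborel)"
proof -
  have der_ray: "((\<lambda>s. \<rho> (s *\<^sub>R y)) has_real_derivative y \<bullet> g (s *\<^sub>R y)) (at s within {0..R})"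
    if "s \<in> {0..R}" for s
  proof -
    have "((\<lambda>s. \<rho> (s *\<^sub>R y)) has_derivative (\<lambda>h. (h *\<^sub>R y) \<bullet> g (s *\<^sub>R y))) (at s)"
      by (rule has_derivative_compose[where f="\<lambda>s. s *\<^sub>R y", OF _ deriv[OF that]])
         (auto intro!: derivative_eq_intros)
    then show ?thesis
      unfolding has_field_derivative_def
      by (rule has_derivative_eq_rhs[OF has_derivative_at_withinI]) (auto simp: fun_eq_iff)
  qed
  have "continuous_on {0..R} (\<lambda>s. y \<bullet> g (s *\<^sub>R y))"
    by (intro continuous_intros cont_g)
  from nn_integral_endpoint_bounds[OF \<open>0 \<le> R\<close> der_ray this nonneg] show
    "(\<integral>\<^sup>+s\<in>{0<..<R}. ennreal (\<rho> (s *\<^sub>R y)) \<partial>lborel)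
       \<le> ennreal (R * \<rho> (R *\<^sub>R y)) + (\<integral>\<^sup>+s\<in>{0<..<R}. ennreal \<bar>(s *\<^sub>R y) \<bullet> g (s *\<^sub>R y)\<bar> \<partial>lborel)"
    "ennreal (R * \<rho> (R *\<^sub>R y))
       \<le> (\<integral>\<^sup>+s\<in>{0<..<R}. ennreal (\<rho> (s *\<^sub>R y)) \<partial>lborel)
         + (\<integral>\<^sup>+s\<in>{0<..<R}. ennreal \<bar>(s *\<^sub>R y) \<bullet> g (s *\<^sub>R y)\<bar> \<partial>lborel)"
    by simp_all
qed

lemma nn_set_integral_le_add:
  fixes f g h :: "'a \<Rightarrow> ennreal"
  assumes "g \<in> borel_measurable M" "h \<in> borel_measurable M" "S \<in> sets M"
    and le: "\<And>y. y \<in> S \<Longrightarrow> f y \<le> g y + h y"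
  shows "(\<integral>\<^sup>+y\<in>S. f y \<partial>M) \<le> (\<integral>\<^sup>+y\<in>S. g y \<partial>M) + (\<integral>\<^sup>+y\<in>S. h y \<partial>M)"
proof -
  have "(\<integral>\<^sup>+y\<in>S. f y \<partial>M) \<le> (\<integral>\<^sup>+y\<in>S. g y + h y \<partial>M)"
    by (intro nn_integral_mono) (use le in \<open>auto simp: indicator_def\<close>)
  also have "\<dots> = (\<integral>\<^sup>+y\<in>S. g y \<partial>M) + (\<integral>\<^sup>+y\<in>S. h y \<partial>M)"
    by (rule nn_set_integral_add) fact+
  finally show ?thesis .
qed

lemma nn_integral_ball_by_rays_restrict:
  fixes f :: "real^2 \<Rightarrow> real"
  assumes "0 < R" and "continuous_on (ball 0 R) f"
  shows "(\<integral>\<^sup>+y\<in>ball 0 1. (\<integral>\<^sup>+s\<in>{0<..<R}. ennreal (indicator (ball 0 R) (s *\<^sub>R y) * f (s *\<^sub>R y)) \<partial>lborel) \<partial>lborel)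
           = (\<integral>\<^sup>+x\<in>ball 0 R. ennreal (1 / norm x - 1 / R) * ennreal (f x) \<partial>lborel)"
proof -
  have "(\<lambda>x. indicator (ball 0 R) x *\<^sub>R f x) \<in> borel_measurable borel"
    by (intro borel_measurable_continuous_on_indicator assms(2)) auto
  then have [measurable]: "(\<lambda>x. indicator (ball 0 R) x * f x) \<in> borel_measurable borel"
    by simp
  have "(\<integral>\<^sup>+y\<in>ball 0 1. (\<integral>\<^sup>+s\<in>{0<..<R}. ennreal (indicator (ball 0 R) (s *\<^sub>R y) * f (s *\<^sub>R y)) \<partial>lborel) \<partial>lborel)
      = (\<integral>\<^sup>+x\<in>ball 0 R. ennreal (1 / norm x - 1 / R) * ennreal (indicator (ball 0 R) x * f x) \<partial>lborel)"
    by (intro nn_integral_ball_by_rays \<open>0 < R\<close>) measurable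
  also have "\<dots> = (\<integral>\<^sup>+x\<in>ball 0 R. ennreal (1 / norm x - 1 / R) * ennreal (f x) \<partial>lborel)"
    by (auto intro!: nn_integral_cong simp: indicator_def)
  finally show ?thesis .
qed

lemma radial_weight_ray_bounds:
  fixes \<rho> :: "real^2 \<Rightarrow> real" and g :: "real^2 \<Rightarrow> real^2"
  assumes "0 < R"
    and deriv: "\<And>x. x \<in> ball 0 R \<Longrightarrow> (\<rho> has_derivative (\<lambda>v. v \<bullet> g x)) (at x)"
    and cont_g: "continuous_on (ball 0 R) g"
    and nonneg: "\<And>x. x \<in> ball 0 R \<Longrightarrow> 0 \<le> \<rho> x"
  defines "A \<equiv> \<integral>\<^sup>+x\<in>ball 0 R. ennreal (1 / norm x - 1 / R) * ennreal (\<rho> x) \<partial>lborel"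
    and "E \<equiv> \<integral>\<^sup>+x\<in>ball 0 R. ennreal (1 / norm x - 1 / R) * ennreal \<bar>x \<bullet> g x\<bar> \<partial>lborel"
    and "Q \<equiv> \<integral>\<^sup>+y\<in>ball 0 1. ennreal (R * \<rho> (R *\<^sub>R y)) \<partial>lborel"
  shows "A \<le> Q + E" and "Q \<le> A + E"
proof -
  have cont: "continuous_on (ball 0 R) \<rho>"
    by (rule has_derivative_continuous_on, rule has_derivative_at_withinI, erule deriv)
  have cont_inner: "continuous_on (ball 0 R) (\<lambda>x. \<bar>x \<bullet> g x\<bar>)"
    by (intro continuous_intros cont_g)
  \<comment> \<open>\<rho> is only controlled on the ball; extending it by 0 makes the ray integrals measurable.\<close>
  define \<rho>\<^sub>0 where "\<rho>\<^sub>0 x = indicator (ball 0 R) x * \<rho> x" for x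
  define I\<^sub>\<rho> where "I\<^sub>\<rho> y = (\<integral>\<^sup>+s\<in>{0<..<R}. ennreal (\<rho>\<^sub>0 (s *\<^sub>R y)) \<partial>lborel)" for y :: "real^2"
  define I\<^sub>g where "I\<^sub>g y = (\<integral>\<^sup>+s\<in>{0<..<R}.
      ennreal (indicator (ball 0 R) (s *\<^sub>R y) * \<bar>(s *\<^sub>R y) \<bullet> g (s *\<^sub>R y)\<bar>) \<partial>lborel)" for y :: "real^2"
  have "(\<lambda>x. indicator (ball 0 R) x *\<^sub>R \<rho> x) \<in> borel_measurable borel"
    "(\<lambda>x. indicator (ball 0 R) x *\<^sub>R \<bar>x \<bullet> g x\<bar>) \<in> borel_measurable borel"
    by (intro borel_measurable_continuous_on_indicator cont cont_inner; simp)+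
  then have [measurable]: "\<rho>\<^sub>0 \<in> borel_measurable borel"
    "(\<lambda>x. indicator (ball 0 R) x * \<bar>x \<bullet> g x\<bar>) \<in> borel_measurable borel"
    unfolding \<rho>\<^sub>0_def by simp_all
  have meas: "I\<^sub>\<rho> \<in> borel_measurable lborel" "I\<^sub>g \<in> borel_measurable lborel"
    "(\<lambda>y. ennreal (R * \<rho>\<^sub>0 (R *\<^sub>R y))) \<in> borel_measurable lborel" "ball (0::real^2) 1 \<in> sets lborel"
    unfolding I\<^sub>\<rho>_def I\<^sub>g_def by measurable
  have A: "A = (\<integral>\<^sup>+y\<in>ball 0 1. I\<^sub>\<rho> y \<partial>lborel)" and E: "E = (\<integral>\<^sup>+y\<in>ball 0 1. I\<^sub>g y \<partial>lborel)"
    unfolding A_def E_def I\<^sub>\<rho>_def I\<^sub>g_def \<rho>\<^sub>0_def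
    using nn_integral_ball_by_rays_restrict[OF \<open>0 < R\<close> cont] nn_integral_ball_by_rays_restrict[OF \<open>0 < R\<close> cont_inner]
    by simp_all
  have Q: "Q = (\<integral>\<^sup>+y\<in>ball 0 1. ennreal (R * \<rho>\<^sub>0 (R *\<^sub>R y)) \<partial>lborel)"
    unfolding Q_def using scaleR_mem_ball[of _ R R] \<open>0 < R\<close>
    by (auto intro!: nn_integral_cong simp: \<rho>\<^sub>0_def indicator_def)
  have ray: "I\<^sub>\<rho> y \<le> ennreal (R * \<rho>\<^sub>0 (R *\<^sub>R y)) + I\<^sub>g y"
    "ennreal (R * \<rho>\<^sub>0 (R *\<^sub>R y)) \<le> I\<^sub>\<rho> y + I\<^sub>g y" if y: "y \<in> ball 0 1" for y
  proof -
    have on_ray: "s *\<^sub>R y \<in> ball 0 R" if "s \<in> {0..R}" for s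
      using scaleR_mem_ball[OF y that \<open>0 < R\<close>] .
    have "continuous_on {0..R} (\<lambda>s. g (s *\<^sub>R y))"
      by (intro continuous_on_compose2[OF cont_g] continuous_intros) (auto intro: on_ray)
    note bounds = nn_integral_ray_bounds[OF less_imp_le[OF \<open>0 < R\<close>] deriv[OF on_ray] this nonneg[OF on_ray]]
    have "I\<^sub>\<rho> y = (\<integral>\<^sup>+s\<in>{0<..<R}. ennreal (\<rho> (s *\<^sub>R y)) \<partial>lborel)"
      "I\<^sub>g y = (\<integral>\<^sup>+s\<in>{0<..<R}. ennreal \<bar>(s *\<^sub>R y) \<bullet> g (s *\<^sub>R y)\<bar> \<partial>lborel)"
      "\<rho>\<^sub>0 (R *\<^sub>R y) = \<rho> (R *\<^sub>R y)"
      unfolding I\<^sub>\<rho>_def I\<^sub>g_def \<rho>\<^sub>0_def using on_ray \<open>0 < R\<close>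
      by (auto intro!: nn_integral_cong simp: indicator_def)
    with bounds show "I\<^sub>\<rho> y \<le> ennreal (R * \<rho>\<^sub>0 (R *\<^sub>R y)) + I\<^sub>g y"
      "ennreal (R * \<rho>\<^sub>0 (R *\<^sub>R y)) \<le> I\<^sub>\<rho> y + I\<^sub>g y"
      by simp_all
  qed
  show "A \<le> Q + E"
    unfolding A Q E by (rule nn_set_integral_le_add[OF meas(3,2,4) ray(1)])
  show "Q \<le> A + E"
    unfolding A Q E by (rule nn_set_integral_le_add[OF meas(1,2,4) ray(2)])
qed

section \<open>The radial weight estimate\<close>

lemma set_integral_eq_enn2real_nn_integral:
  fixes f :: "'a \<Rightarrow> real"
  assumes "set_borel_measurable M A f" and "AE x\<in>A in M. 0 \<le> f x"
    and "(\<integral>\<^sup>+x\<in>A. ennreal (f x) \<partial>M) < \<infinity>"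
  shows "set_integrable M A f" and "(LINT x:A|M. f x) = enn2real (\<integral>\<^sup>+x\<in>A. ennreal (f x) \<partial>M)"
proof -
  have nn: "(\<integral>\<^sup>+x. ennreal (indicator A x *\<^sub>R f x) \<partial>M) = (\<integral>\<^sup>+x\<in>A. ennreal (f x) \<partial>M)"
    by (auto intro!: nn_integral_cong simp: indicator_def)
  have AE: "AE x in M. 0 \<le> indicator A x *\<^sub>R f x"
    using assms(2) by eventually_elim (simp add: indicator_def)
  show int: "set_integrable M A f"
    unfolding set_integrable_def using assms(1,3) AE nn
    by (intro integrableI_nonneg) (auto simp: set_borel_measurable_def)
  show "(LINT x:A|M. f x) = enn2real (\<integral>\<^sup>+x\<in>A. ennreal (f x) \<partial>M)"
    using nn_integral_eq_integral[OF int[unfolded set_integrable_def] AE] integral_nonneg_AE[OF AE]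
    unfolding set_lebesgue_integral_def nn by simp
qed

lemma abs_enn2real_diff_le:
  fixes A Q E :: ennreal
  assumes "A \<le> Q + E" and "Q \<le> A + E" and "Q < \<infinity>" and "E < \<infinity>"
  shows "\<bar>enn2real A - enn2real Q\<bar> \<le> enn2real E"
proof -
  have "A < \<infinity>"
    using assms by (simp add: order.strict_trans1)
  with assms have "enn2real A \<le> enn2real Q + enn2real E" "enn2real Q \<le> enn2real A + enn2real E"
    by (auto simp flip: enn2real_plus intro!: enn2real_mono)
  then show ?thesis
    by linarith
qed

lemma radial_weight_inner_le:
  fixes x v :: "'a::real_inner"
  assumes "0 < R" and "norm x < R"
  shows "ennreal (1 / norm x - 1 / R) * ennreal \<bar>x \<bullet> v\<bar> \<le> ennreal (norm v)"
proof (cases "x = 0")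
  case True
  then show ?thesis
    using \<open>0 < R\<close> by (simp add: ennreal_neg)
next
  case False
  then have w: "0 \<le> 1 / norm x - 1 / R"
    using assms by (simp add: frac_le)
  have "(1 / norm x - 1 / R) * \<bar>x \<bullet> v\<bar> \<le> (1 / norm x - 1 / R) * (norm x * norm v)"
    by (rule mult_left_mono[OF Cauchy_Schwarz_ineq2 w])
  also have "\<dots> = (1 - norm x / R) * norm v"
    using False by (simp add: field_simps)
  also have "\<dots> \<le> norm v"
    using assms by (intro mult_left_le_one_le) auto
  finally show ?thesis
    using w by (simp add: ennreal_mult[symmetric] ennreal_leI)
qed

lemma nn_integral_ball_lt_top:
  fixes f :: "'a::euclidean_space \<Rightarrow> real"
  assumes "continuous_on (cball 0 R) f"
  shows "(\<integral>\<^sup>+x\<in>ball 0 R. ennreal (f x) \<partial>lborel) < \<infinity>"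
proof -
  obtain M where M: "\<And>x. x \<in> cball 0 R \<Longrightarrow> f x \<le> M"
    using compact_attains_sup[OF compact_continuous_image[OF assms compact_cball]] by fastforce
  have "(\<integral>\<^sup>+x\<in>ball 0 R. ennreal (f x) \<partial>lborel) \<le> (\<integral>\<^sup>+x\<in>ball (0::'a) R. ennreal M \<partial>lborel)"
    by (intro nn_integral_mono) (use M in \<open>auto simp: indicator_def intro: ennreal_leI\<close>)
  also have "\<dots> < \<infinity>"
    using emeasure_bounded_finite[OF bounded_ball[of "0::'a" R]]
    by (simp add: nn_integral_cmult_indicator ennreal_mult_less_top)
  finally show ?thesis .
qed

lemma nn_integral_ball_eq_scaled_unit_ball:
  fixes \<rho> :: "real^2 \<Rightarrow> real"
  assumes "0 < R" and cont: "continuous_on (ball 0 R) \<rho>"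
    and nonneg: "\<And>x. x \<in> ball 0 R \<Longrightarrow> 0 \<le> \<rho> x"
  shows "(\<integral>\<^sup>+x\<in>ball 0 R. ennreal (\<rho> x) \<partial>lborel)
           = ennreal R * (\<integral>\<^sup>+y\<in>ball 0 1. ennreal (R * \<rho> (R *\<^sub>R y)) \<partial>lborel)"
proof -
  define \<rho>\<^sub>0 where "\<rho>\<^sub>0 x = ennreal (indicator (ball 0 R) x * \<rho> x)" for x
  have "(\<lambda>x. indicator (ball 0 R) x *\<^sub>R \<rho> x) \<in> borel_measurable borel"
    by (intro borel_measurable_continuous_on_indicator cont) auto
  then have [measurable]: "(\<lambda>x. indicator (ball 0 R) x * \<rho> x) \<in> borel_measurable borel"
    by simp
  have m: "\<rho>\<^sub>0 \<in> borel_measurable borel"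
    unfolding \<rho>\<^sub>0_def by measurable
  have [measurable]: "(\<lambda>y. \<rho>\<^sub>0 (R *\<^sub>R y)) \<in> borel_measurable borel"
    by (rule measurable_compose[OF _ m]) measurable
  have [measurable]: "ball (0::real^2) 1 \<in> sets borel"
    by simp
  have "(\<integral>\<^sup>+x\<in>ball 0 R. ennreal (\<rho> x) \<partial>lborel) = (\<integral>\<^sup>+x\<in>ball 0 R. \<rho>\<^sub>0 x \<partial>lborel)"
    unfolding \<rho>\<^sub>0_def by (auto intro!: nn_integral_cong simp: indicator_def)
  also have "\<dots> = ennreal R * (ennreal R * (\<integral>\<^sup>+y\<in>ball 0 1. \<rho>\<^sub>0 (R *\<^sub>R y) \<partial>lborel))"
    using nn_integral_ball_rescale[OF m \<open>0 < R\<close>] \<open>0 < R\<close> by (simp add: power2_eq_square ennreal_mult mult.assoc)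
  also have "ennreal R * (\<integral>\<^sup>+y\<in>ball 0 1. \<rho>\<^sub>0 (R *\<^sub>R y) \<partial>lborel) = (\<integral>\<^sup>+y\<in>ball 0 1. ennreal R * \<rho>\<^sub>0 (R *\<^sub>R y) \<partial>lborel)"
    by (subst mult.assoc, rule nn_integral_cmult[symmetric]) measurable
  also have "\<dots> = (\<integral>\<^sup>+y\<in>ball 0 1. ennreal (R * \<rho> (R *\<^sub>R y)) \<partial>lborel)"
    unfolding \<rho>\<^sub>0_def using \<open>0 < R\<close> nonneg
    by (auto intro!: nn_integral_cong simp: indicator_def ennreal_mult[symmetric])
  finally show ?thesis .
qed

lemma set_integral_radial_weight_split:
  fixes \<rho> :: "'a::euclidean_space \<Rightarrow> real"
  assumes "0 < R" and cont: "continuous_on (ball 0 R) \<rho>"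
    and nonneg: "\<And>x. x \<in> ball 0 R \<Longrightarrow> 0 \<le> \<rho> x"
  defines "A \<equiv> \<integral>\<^sup>+x\<in>ball 0 R. ennreal (1 / norm x - 1 / R) * ennreal (\<rho> x) \<partial>lborel"
    and "P \<equiv> \<integral>\<^sup>+x\<in>ball 0 R. ennreal (\<rho> x) \<partial>lborel"
  assumes "A < \<infinity>" and "P < \<infinity>"
  shows "(LINT x:ball 0 R|lborel. (1 / norm x - 2 / R) * \<rho> x) = enn2real A - enn2real P / R"
proof -
  have "(\<lambda>x. indicator (ball 0 R) x *\<^sub>R \<rho> x) \<in> borel_measurable borel"
    by (intro borel_measurable_continuous_on_indicator cont) auto
  then have \<rho>_meas: "set_borel_measurable lborel (ball 0 R) \<rho>"
    unfolding set_borel_measurable_def by simp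
  define f where "f x = (1 / norm x - 1 / R) * \<rho> x" for x :: 'a
  have "(\<lambda>x. indicator (ball 0 R) x *\<^sub>R f x) = (\<lambda>x. (1 / norm x - 1 / R) * (indicator (ball 0 R) x *\<^sub>R \<rho> x))"
    by (simp add: f_def fun_eq_iff)
  with \<rho>_meas have f_meas: "set_borel_measurable lborel (ball 0 R) f"
    unfolding set_borel_measurable_def by simp
  have f_nonneg: "AE x\<in>ball 0 R in lborel. 0 \<le> f x"
    using AE_lborel_singleton[of 0]
    by eventually_elim (use \<open>0 < R\<close> nonneg in \<open>auto simp: f_def frac_le\<close>)
  have f_A: "(\<integral>\<^sup>+x\<in>ball 0 R. ennreal (f x) \<partial>lborel) = A"
    unfolding A_def f_def using nonneg by (auto intro!: nn_integral_cong simp: ennreal_mult'' indicator_def)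
  note f = set_integral_eq_enn2real_nn_integral[OF f_meas f_nonneg, unfolded f_A, OF \<open>A < \<infinity>\<close>]
  note \<rho> = set_integral_eq_enn2real_nn_integral[OF \<rho>_meas _ \<open>P < \<infinity>\<close>[unfolded P_def]]
  have "(LINT x:ball 0 R|lborel. (1 / norm x - 2 / R) * \<rho> x) = (LINT x:ball 0 R|lborel. f x - \<rho> x / R)"
    unfolding f_def by (simp add: algebra_simps)
  also have "\<dots> = enn2real A - enn2real P / R"
    using f \<rho> nonneg unfolding P_def by (simp add: set_integral_diff)
  finally show ?thesis .
qed

lemma abs_integral_radial_weight_le:
  fixes \<rho> :: "real^2 \<Rightarrow> real" and g :: "real^2 \<Rightarrow> real^2"
  assumes "0 < R" and cont: "continuous_on (cball 0 R) \<rho>"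
    and deriv: "\<And>x. x \<in> ball 0 R \<Longrightarrow> (\<rho> has_derivative (\<lambda>v. v \<bullet> g x)) (at x)"
    and cont_g: "continuous_on (ball 0 R) g"
    and nonneg: "\<And>x. x \<in> ball 0 R \<Longrightarrow> 0 \<le> \<rho> x"
  shows "ennreal \<bar>LINT x:ball 0 R|lborel. (1 / norm x - 2 / R) * \<rho> x\<bar>
           \<le> (\<integral>\<^sup>+x\<in>ball 0 R. ennreal (norm (g x)) \<partial>lborel)"
    (is "_ \<le> ?G")
proof (cases "?G = \<infinity>")
  case False
  define A where "A = (\<integral>\<^sup>+x\<in>ball 0 R. ennreal (1 / norm x - 1 / R) * ennreal (\<rho> x) \<partial>lborel)"
  define E where "E = (\<integral>\<^sup>+x\<in>ball 0 R. ennreal (1 / norm x - 1 / R) * ennreal \<bar>x \<bullet> g x\<bar> \<partial>lborel)"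
  define Q where "Q = (\<integral>\<^sup>+y\<in>ball 0 1. ennreal (R * \<rho> (R *\<^sub>R y)) \<partial>lborel)"
  define P where "P = (\<integral>\<^sup>+x\<in>ball 0 R. ennreal (\<rho> x) \<partial>lborel)"
  note bounds = radial_weight_ray_bounds[OF \<open>0 < R\<close> deriv cont_g nonneg, folded A_def E_def Q_def]
  have "E \<le> ?G"
    unfolding E_def using radial_weight_inner_le[OF \<open>0 < R\<close>]
    by (intro nn_integral_mono) (auto simp: indicator_def)
  with False have "E < \<infinity>"
    by (simp add: order.strict_trans1 top.not_eq_extremum)
  have cont_ball: "continuous_on (ball 0 R) \<rho>"
    using cont ball_subset_cball by (rule continuous_on_subset)
  have P: "P = ennreal R * Q"
    unfolding P_def Q_def using nn_integral_ball_eq_scaled_unit_ball[OF \<open>0 < R\<close> cont_ball nonneg] .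
  have "P < \<infinity>"
    unfolding P_def by (rule nn_integral_ball_lt_top[OF cont])
  with P \<open>0 < R\<close> have "Q < \<infinity>"
    by (auto simp: ennreal_mult_less_top top.not_eq_extremum)
  with bounds(1) \<open>E < \<infinity>\<close> have "A < \<infinity>"
    by (simp add: order.strict_trans1)
  have "(LINT x:ball 0 R|lborel. (1 / norm x - 2 / R) * \<rho> x) = enn2real A - enn2real P / R"
    unfolding A_def P_def
    by (rule set_integral_radial_weight_split[OF \<open>0 < R\<close> cont_ball nonneg])
       (use \<open>A < \<infinity>\<close> \<open>P < \<infinity>\<close> in \<open>simp_all add: A_def P_def\<close>)
  also have "\<dots> = enn2real A - enn2real Q"
    using P \<open>0 < R\<close> by (simp add: enn2real_mult)
  finally have "\<bar>LINT x:ball 0 R|lborel. (1 / norm x - 2 / R) * \<rho> x\<bar> \<le> enn2real E"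
    using abs_enn2real_diff_le[OF bounds \<open>Q < \<infinity>\<close> \<open>E < \<infinity>\<close>] by simp
  also have "enn2real E \<le> enn2real ?G"
    using \<open>E \<le> ?G\<close> False by (simp add: enn2real_mono top.not_eq_extremum)
  finally have "ennreal \<bar>LINT x:ball 0 R|lborel. (1 / norm x - 2 / R) * \<rho> x\<bar> \<le> ennreal (enn2real ?G)"
    by (rule ennreal_leI)
  with False show ?thesis
    by (simp add: top.not_eq_extremum)
qed simp

section \<open>Gradients in the plane\<close>

lemma linear_eq_inner_axis:
  fixes L :: "real^'n \<Rightarrow> real"
  assumes "linear L"
  shows "L v = v \<bullet> (\<chi> i. L (axis i 1))"
proof -
  have "L v = L (\<Sum>i\<in>UNIV. v$i *\<^sub>R axis i 1)"
    using basis_expansion[of v] by (simp add: scalar_mult_eq_scaleR)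
  also have "\<dots> = (\<Sum>i\<in>UNIV. v$i * L (axis i 1))"
    using assms by (simp add: linear_sum linear_scale)
  finally show ?thesis
    by (simp add: inner_vec_def)
qed

lemma has_derivative_grad:
  fixes f :: "real^2 \<Rightarrow> real"
  assumes "(f has_derivative D) (at x)"
  shows "D = (\<lambda>v. v \<bullet> grad f x)"
proof
  fix v
  have "D v = v \<bullet> (\<chi> i. D (axis i 1))"
    by (rule linear_eq_inner_axis[OF has_derivative_linear[OF assms]])
  also have "(\<chi> i. D (axis i 1)) = grad f x"
    by (simp add: grad_def frechet_derivative_at[OF assms, symmetric])
  finally show "D v = v \<bullet> grad f x" .
qed

lemma smooth_on_imp_C1:
  fixes f :: "real^2 \<Rightarrow> real"
  assumes "open U" and "S \<subseteq> U" and "smooth_on U f"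
  shows "\<And>x. x \<in> S \<Longrightarrow> (f has_derivative (\<lambda>v. v \<bullet> grad f x)) (at x)"
    and "continuous_on S (grad f)"
    and "continuous_on S f"
proof -
  have "higher_differentiable_on 1 U f"
    using assms(3) unfolding smooth_on_def by blast
  then have diff: "f differentiable_on U"
    and cont: "\<And>v. continuous_on U (\<lambda>x. frechet_derivative f (at x) v)"
    by simp_all
  show "(f has_derivative (\<lambda>v. v \<bullet> grad f x)) (at x)" if "x \<in> S" for x
  proof -
    have "f differentiable (at x)"
      using diff that assms(1,2) by (auto simp: differentiable_on_eq_differentiable_at)
    then have D: "(f has_derivative frechet_derivative f (at x)) (at x)"
      by (simp add: frechet_derivative_works)
    with has_derivative_grad[OF D] show ?thesis
      by simp
  qed
  show "continuous_on S (grad f)"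
    unfolding grad_def by (intro continuous_on_vec_lambda continuous_on_subset[OF cont assms(2)])
  show "continuous_on S f"
    using differentiable_imp_continuous_on[OF diff] assms(2) by (rule continuous_on_subset)
qed

lemma grad_powr:
  fixes f :: "real^2 \<Rightarrow> real"
  assumes "(f has_derivative D) (at x)" and "0 < f x"
  shows "grad (\<lambda>y. f y powr \<alpha>) x = (\<alpha> * f x powr (\<alpha> - 1)) *\<^sub>R grad f x"
proof -
  have "((\<lambda>y. f y powr \<alpha>) has_derivative (\<lambda>v. (\<alpha> * f x powr (\<alpha> - 1)) * D v)) (at x)"
    using has_derivative_powr[OF assms(1) has_derivative_const assms(2), of \<alpha>, simplified]
    by (rule has_derivative_eq_rhs) (use assms(2) in \<open>auto simp: fun_eq_iff powr_diff field_simps\<close>)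
  from has_derivative_grad[OF this] has_derivative_grad[OF assms(1)]
  have "axis i 1 \<bullet> grad (\<lambda>y. f y powr \<alpha>) x = \<alpha> * f x powr (\<alpha> - 1) * (axis i 1 \<bullet> grad f x)" for i
    by (simp add: fun_eq_iff)
  then show ?thesis
    by (simp add: vec_eq_iff inner_axis')
qed

lemma grad_eq_0_at_local_min:
  fixes f :: "real^2 \<Rightarrow> real"
  assumes "(f has_derivative D) (at x)" and "open V" and "x \<in> V" and "\<And>y. y \<in> V \<Longrightarrow> f x \<le> f y"
  shows "grad f x = 0"
proof -
  have "eventually (\<lambda>y. f x \<le> f y) (at x)"
    using assms(2-4) by (auto simp: eventually_at_topological)
  then have "D = (\<lambda>v. 0)"
    by (rule has_derivative_local_min[OF assms(1)])
  with has_derivative_grad[OF assms(1)] have "axis i 1 \<bullet> grad f x = 0" for i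
    by (simp add: fun_eq_iff)
  then show ?thesis
    by (simp add: vec_eq_iff inner_axis')
qed

section \<open>Young's inequality for the gradient\<close>

lemma Youngs_inequality_weighted:
  fixes a b \<gamma> \<alpha> r t :: real
  assumes "0 < a" "0 < b" "1 < \<gamma>" "0 < \<alpha>" "0 \<le> r" "0 \<le> t" "r = 0 \<Longrightarrow> t = 0"
  shows "a * b * \<alpha> * t
           \<le> a powr \<gamma> / \<gamma> * (if 0 < r then (\<alpha> * r powr (\<alpha> - 1) * t) powr \<gamma> else 0)
             + b powr (\<gamma> / (\<gamma> - 1)) / (\<gamma> / (\<gamma> - 1)) * r powr ((1 - \<alpha>) * (\<gamma> / (\<gamma> - 1)))"
    (is "_ \<le> ?rhs")
proof (cases "r = 0")
  case True
  then show ?thesis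
    using assms by simp
next
  case False
  with assms have "0 < r" by simp
  define u where "u = \<alpha> * r powr (\<alpha> - 1) * t"
  define v where "v = r powr (1 - \<alpha>)"
  have "a * b * \<alpha> * t = (a * u) * (b * v)"
    using \<open>0 < r\<close> by (simp add: u_def v_def powr_add[symmetric])
  also have "\<dots> \<le> (a * u) powr \<gamma> / \<gamma> + (b * v) powr (\<gamma> / (\<gamma> - 1)) / (\<gamma> / (\<gamma> - 1))"
    using assms by (intro Youngs_inequality) (auto simp: u_def v_def field_simps)
  also have "\<dots> = ?rhs"
    using assms \<open>0 < r\<close> by (simp add: u_def v_def powr_mult powr_powr)
  finally show ?thesis .
qed

lemma Youngs_inequality_grad_powr:
  fixes \<rho> :: "real^2 \<Rightarrow> real"
  assumes "open V" and "x \<in> V" and nonneg: "\<And>y. y \<in> V \<Longrightarrow> 0 \<le> \<rho> y"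
    and deriv: "(\<rho> has_derivative D) (at x)"
    and "0 < a" "0 < b" "1 < \<gamma>" "0 < \<alpha>"
  shows "a * b * \<alpha> * norm (grad \<rho> x)
           \<le> a powr \<gamma> / \<gamma> * (if 0 < \<rho> x then norm (grad (\<lambda>y. \<rho> y powr \<alpha>) x) powr \<gamma> else 0)
             + b powr (\<gamma> / (\<gamma> - 1)) / (\<gamma> / (\<gamma> - 1)) * \<rho> x powr ((1 - \<alpha>) * (\<gamma> / (\<gamma> - 1)))"
proof -
  have "norm (grad \<rho> x) = 0" if "\<rho> x = 0"
    using grad_eq_0_at_local_min[OF deriv \<open>open V\<close> \<open>x \<in> V\<close>] nonneg that by simp
  then have "a * b * \<alpha> * norm (grad \<rho> x)
      \<le> a powr \<gamma> / \<gamma> * (if 0 < \<rho> x then (\<alpha> * \<rho> x powr (\<alpha> - 1) * norm (grad \<rho> x)) powr \<gamma> else 0)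
        + b powr (\<gamma> / (\<gamma> - 1)) / (\<gamma> / (\<gamma> - 1)) * \<rho> x powr ((1 - \<alpha>) * (\<gamma> / (\<gamma> - 1)))"
    using assms by (intro Youngs_inequality_weighted) auto
  also have "(if 0 < \<rho> x then (\<alpha> * \<rho> x powr (\<alpha> - 1) * norm (grad \<rho> x)) powr \<gamma> else 0)
      = (if 0 < \<rho> x then norm (grad (\<lambda>y. \<rho> y powr \<alpha>) x) powr \<gamma> else 0)"
    using grad_powr[OF deriv] \<open>0 < \<alpha>\<close> by simp
  finally show ?thesis .
qed

lemma borel_measurable_norm_grad_powr:
  fixes \<rho> :: "real^2 \<Rightarrow> real"
  assumes deriv: "\<And>x. x \<in> S \<Longrightarrow> (\<rho> has_derivative (\<lambda>v. v \<bullet> grad \<rho> x)) (at x)"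
    and "continuous_on S (grad \<rho>)"
  shows "(\<lambda>x. if 0 < \<rho> x then norm (grad (\<lambda>y. \<rho> y powr \<alpha>) x) powr \<gamma> else 0)
           \<in> borel_measurable (restrict_space borel S)"
proof -
  have "continuous_on S \<rho>"
    by (rule has_derivative_continuous_on, rule has_derivative_at_withinI, erule deriv)
  then have [measurable]: "\<rho> \<in> borel_measurable (restrict_space borel S)"
    "grad \<rho> \<in> borel_measurable (restrict_space borel S)"
    using assms(2) by (simp_all add: borel_measurable_continuous_on_restrict)
  have "(\<lambda>x. if 0 < \<rho> x then norm ((\<alpha> * \<rho> x powr (\<alpha> - 1)) *\<^sub>R grad \<rho> x) powr \<gamma> else 0)
      \<in> borel_measurable (restrict_space borel S)"
    by measurable
  then show ?thesis
    by (rule measurable_cong[THEN iffD1, rotated]) (simp add: space_restrict_space grad_powr[OF deriv])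
qed

lemma nn_set_integral_le_lincomb:
  fixes u v w :: "'a \<Rightarrow> real"
  assumes "S \<in> sets M"
    and meas: "u \<in> borel_measurable (restrict_space M S)"
      "v \<in> borel_measurable (restrict_space M S)" "w \<in> borel_measurable (restrict_space M S)"
    and "0 \<le> c" "0 \<le> p" "0 \<le> q"
    and le: "\<And>x. x \<in> S \<Longrightarrow> c * u x \<le> p * v x + q * w x"
    and "\<And>x. x \<in> S \<Longrightarrow> 0 \<le> v x" "\<And>x. x \<in> S \<Longrightarrow> 0 \<le> w x"
  shows "ennreal c * (\<integral>\<^sup>+x\<in>S. ennreal (u x) \<partial>M)
           \<le> ennreal p * (\<integral>\<^sup>+x\<in>S. ennreal (v x) \<partial>M) + ennreal q * (\<integral>\<^sup>+x\<in>S. ennreal (w x) \<partial>M)"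
proof -
  have m: "(\<lambda>x. ennreal (f x) * indicator S x) \<in> borel_measurable M"
    if "f \<in> borel_measurable (restrict_space M S)" for f
    using borel_measurable_restrict_space_iff_ennreal[of S M "\<lambda>x. ennreal (f x)"]
      measurable_compose[OF that measurable_ennreal] \<open>S \<in> sets M\<close>
    by (simp add: sets.Int_space_eq2)
  note mu = m[OF meas(1)] and mv = m[OF meas(2)] and mw = m[OF meas(3)]
  have "ennreal c * (\<integral>\<^sup>+x\<in>S. ennreal (u x) \<partial>M) = (\<integral>\<^sup>+x. ennreal c * (ennreal (u x) * indicator S x) \<partial>M)"
    by (rule nn_integral_cmult[OF mu, symmetric])
  also have "\<dots> \<le> (\<integral>\<^sup>+x. ennreal p * (ennreal (v x) * indicator S x)
                        + ennreal q * (ennreal (w x) * indicator S x) \<partial>M)"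
  proof (rule nn_integral_mono)
    fix x
    have "ennreal c * ennreal (u x) \<le> ennreal p * ennreal (v x) + ennreal q * ennreal (w x)" if "x \<in> S"
    proof -
      have "ennreal c * ennreal (u x) = ennreal (c * u x)"
        using \<open>0 \<le> c\<close> by (simp add: ennreal_mult')
      also have "\<dots> \<le> ennreal (p * v x + q * w x)"
        using le[OF that] by (rule ennreal_leI)
      also have "\<dots> = ennreal p * ennreal (v x) + ennreal q * ennreal (w x)"
        using assms(5-7,9,10) that by (simp add: ennreal_plus ennreal_mult)
      finally show ?thesis .
    qed
    then show "ennreal c * (ennreal (u x) * indicator S x)
        \<le> ennreal p * (ennreal (v x) * indicator S x) + ennreal q * (ennreal (w x) * indicator S x)"
      by (cases "x \<in> S") (simp_all add: mult.assoc[symmetric])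
  qed
  also have "\<dots> = ennreal p * (\<integral>\<^sup>+x\<in>S. ennreal (v x) \<partial>M) + ennreal q * (\<integral>\<^sup>+x\<in>S. ennreal (w x) \<partial>M)"
    by (simp add: nn_integral_add borel_measurable_times_ennreal mv mw nn_integral_cmult)
  finally show ?thesis .
qed

lemma nn_set_integral_Youngs_grad_powr:
  fixes \<rho> :: "real^2 \<Rightarrow> real"
  assumes "open S"
    and deriv: "\<And>x. x \<in> S \<Longrightarrow> (\<rho> has_derivative (\<lambda>v. v \<bullet> grad \<rho> x)) (at x)"
    and cont_grad: "continuous_on S (grad \<rho>)"
    and nonneg: "\<And>x. x \<in> S \<Longrightarrow> 0 \<le> \<rho> x"
    and "0 < a" "0 < b" "1 < \<gamma>" "0 < \<alpha>"
  shows "ennreal (a * b * \<alpha>) * (\<integral>\<^sup>+x\<in>S. ennreal (norm (grad \<rho> x)) \<partial>lborel)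
           \<le> ennreal (a powr \<gamma> / \<gamma>) * (\<integral>\<^sup>+x\<in>S. ennreal (if 0 < \<rho> x
                 then norm (grad (\<lambda>y. \<rho> y powr \<alpha>) x) powr \<gamma> else 0) \<partial>lborel)
             + ennreal (b powr (\<gamma> / (\<gamma> - 1)) / (\<gamma> / (\<gamma> - 1)))
                 * (\<integral>\<^sup>+x\<in>S. ennreal (\<rho> x powr ((1 - \<alpha>) * (\<gamma> / (\<gamma> - 1)))) \<partial>lborel)"
proof (rule nn_set_integral_le_lincomb)
  have sets_eq: "borel_measurable (restrict_space lborel S) = borel_measurable (restrict_space borel S)"
    by (rule measurable_cong_sets[OF sets_restrict_space_cong[OF sets_lborel] refl])
  have "continuous_on S \<rho>"
    by (rule has_derivative_continuous_on, rule has_derivative_at_withinI, erule deriv)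
  then have [measurable]: "\<rho> \<in> borel_measurable (restrict_space borel S)"
    "grad \<rho> \<in> borel_measurable (restrict_space borel S)"
    using cont_grad by (simp_all add: borel_measurable_continuous_on_restrict)
  show "(\<lambda>x. norm (grad \<rho> x)) \<in> borel_measurable (restrict_space lborel S)"
    "(\<lambda>x. \<rho> x powr ((1 - \<alpha>) * (\<gamma> / (\<gamma> - 1)))) \<in> borel_measurable (restrict_space lborel S)"
    unfolding sets_eq by measurable
  show "(\<lambda>x. if 0 < \<rho> x then norm (grad (\<lambda>y. \<rho> y powr \<alpha>) x) powr \<gamma> else 0)
      \<in> borel_measurable (restrict_space lborel S)"
    unfolding sets_eq by (rule borel_measurable_norm_grad_powr[OF deriv cont_grad])
  show "a * b * \<alpha> * norm (grad \<rho> x)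
      \<le> a powr \<gamma> / \<gamma> * (if 0 < \<rho> x then norm (grad (\<lambda>y. \<rho> y powr \<alpha>) x) powr \<gamma> else 0)
        + b powr (\<gamma> / (\<gamma> - 1)) / (\<gamma> / (\<gamma> - 1)) * \<rho> x powr ((1 - \<alpha>) * (\<gamma> / (\<gamma> - 1)))"
    if "x \<in> S" for x
    using Youngs_inequality_grad_powr[OF \<open>open S\<close> that nonneg deriv[OF that]] assms(5-) by blast
qed (use \<open>open S\<close> assms(5-) in auto)

lemma radial_gradient_estimate:
  fixes \<rho> :: "real^2 \<Rightarrow> real"
  assumes "0 < R" and "1 < \<gamma>" and "0 < \<alpha>" and "0 < a" and "0 < b"
    and cont: "continuous_on (cball 0 R) \<rho>"
    and deriv: "\<And>x. x \<in> ball 0 R \<Longrightarrow> (\<rho> has_derivative (\<lambda>v. v \<bullet> grad \<rho> x)) (at x)"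
    and cont_grad: "continuous_on (ball 0 R) (grad \<rho>)"
    and nonneg: "\<And>x. x \<in> ball 0 R \<Longrightarrow> 0 \<le> \<rho> x"
  shows "ennreal (a * b * \<alpha> * \<bar>LINT x:ball 0 R|lborel. (1 / norm x - 2 / R) * \<rho> x\<bar>)
           \<le> ennreal (a powr \<gamma> / \<gamma>) * (\<integral>\<^sup>+x\<in>ball 0 R. ennreal (if 0 < \<rho> x
                 then norm (grad (\<lambda>y. \<rho> y powr \<alpha>) x) powr \<gamma> else 0) \<partial>lborel)
             + ennreal (b powr (\<gamma> / (\<gamma> - 1)) / (\<gamma> / (\<gamma> - 1)))
                 * (\<integral>\<^sup>+x\<in>ball 0 R. ennreal (\<rho> x powr ((1 - \<alpha>) * (\<gamma> / (\<gamma> - 1)))) \<partial>lborel)"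
proof -
  have "ennreal (a * b * \<alpha> * \<bar>LINT x:ball 0 R|lborel. (1 / norm x - 2 / R) * \<rho> x\<bar>)
      = ennreal (a * b * \<alpha>) * ennreal \<bar>LINT x:ball 0 R|lborel. (1 / norm x - 2 / R) * \<rho> x\<bar>"
    using assms(3-5) by (simp add: ennreal_mult)
  also have "\<dots> \<le> ennreal (a * b * \<alpha>) * (\<integral>\<^sup>+x\<in>ball 0 R. ennreal (norm (grad \<rho> x)) \<partial>lborel)"
    by (intro mult_left_mono abs_integral_radial_weight_le[OF assms(1) cont deriv cont_grad nonneg] zero_le)
  also have "\<dots> \<le> ennreal (a powr \<gamma> / \<gamma>) * (\<integral>\<^sup>+x\<in>ball 0 R. ennreal (if 0 < \<rho> x
                 then norm (grad (\<lambda>y. \<rho> y powr \<alpha>) x) powr \<gamma> else 0) \<partial>lborel)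
             + ennreal (b powr (\<gamma> / (\<gamma> - 1)) / (\<gamma> / (\<gamma> - 1)))
                 * (\<integral>\<^sup>+x\<in>ball 0 R. ennreal (\<rho> x powr ((1 - \<alpha>) * (\<gamma> / (\<gamma> - 1)))) \<partial>lborel)"
    by (rule nn_set_integral_Youngs_grad_powr[OF open_ball deriv cont_grad nonneg assms(4,5,2,3)])
  finally show ?thesis .
qed

lemma Cconst_weighted_sum_le:
  fixes x y p q :: real and A B :: ennreal
  assumes "0 < p" "0 < q" "0 \<le> x" "0 \<le> y"
  shows "ennreal (x / p) * A + ennreal (y / q) * B
           \<le> ennreal (x * Cconst p / p) * A + ennreal (y * Cconst q / q) * B"
proof -
  have "z / r \<le> z * Cconst r / r" if "0 < r" "0 \<le> z" for z r :: real
    using that by (intro divide_right_mono mult_le_cancel_left1[THEN iffD2])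
      (auto simp: Cconst_def ge_one_powr_ge_zero)
  with assms show ?thesis
    by (intro add_mono mult_right_mono ennreal_leI) auto
qed

theorem theorem3p1:
  fixes R \<gamma> :: real and \<rho> :: "real^2 \<Rightarrow> real"
  assumes "R > 0" and "1 < \<gamma>" and "\<gamma> < 3"
    and "\<exists>U. open U \<and> cball 0 R \<subseteq> U \<and> smooth_on U \<rho>"
    and "\<forall>x\<in>cball 0 R. \<rho> x \<ge> 0"
  shows "\<forall>a b :: real. a > 0 \<longrightarrow> b > 0 \<longrightarrow>
    (let \<alpha> = (3 - \<gamma>) / (2 * \<gamma>); \<delta> = \<gamma> / (\<gamma> - 1) in
      ennreal (a * b * \<alpha> * \<bar>LINT x:ball 0 R|lborel. (1 / norm x - 2 / R) * \<rho> x\<bar>)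
      \<le> ennreal (a powr \<gamma> * Cconst \<gamma> / \<gamma>) *
          (\<integral>\<^sup>+ x\<in>ball 0 R. ennreal (if \<rho> x > 0
               then norm (grad (\<lambda>y. \<rho> y powr \<alpha>) x) powr \<gamma> else 0) \<partial>lborel)
        + ennreal (b powr \<delta> * Cconst \<delta> / \<delta>) *
          (\<integral>\<^sup>+ x\<in>ball 0 R. ennreal (\<rho> x powr (3/2)) \<partial>lborel))"
proof -
  obtain U where "open U" "cball 0 R \<subseteq> U" "smooth_on U \<rho>"
    using assms(4) by blast
  note C1 = smooth_on_imp_C1[OF this]
  have deriv: "\<And>x. x \<in> ball 0 R \<Longrightarrow> (\<rho> has_derivative (\<lambda>v. v \<bullet> grad \<rho> x)) (at x)"
    and cont_grad: "continuous_on (ball 0 R) (grad \<rho>)"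
    using C1(1,2) continuous_on_subset ball_subset_cball by blast+
  have nonneg: "\<And>x. x \<in> ball 0 R \<Longrightarrow> 0 \<le> \<rho> x"
    using assms(5) by auto
  have "0 < (3 - \<gamma>) / (2 * \<gamma>)" and "0 < \<gamma> / (\<gamma> - 1)"
    and exponent: "(1 - (3 - \<gamma>) / (2 * \<gamma>)) * (\<gamma> / (\<gamma> - 1)) = 3 / 2"
    using assms(2,3) by (auto simp: field_simps)
  note estimate = radial_gradient_estimate[OF assms(1,2) \<open>0 < (3 - \<gamma>) / (2 * \<gamma>)\<close> _ _
      C1(3) deriv cont_grad nonneg, unfolded exponent]
  show ?thesis
    unfolding Let_def
    using order.trans[OF estimate Cconst_weighted_sum_le] assms(2) \<open>0 < \<gamma> / (\<gamma> - 1)\<close> by auto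
qed

end
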